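(* Let $n\ge2$, $M$ a nonderogatory $d\times d$ matrix with minimal polynomial $\mathbf p$, and $\mathcal B$ a generic maximal subalgebra of $\mathcal T_{n,d}[\mathcal P(M)]$ with associated polynomials $\mathbf s_+,\mathbf s_-$; put $\mathbf d=\mathbf p/(\mathbf s_+\mathbf s_-)$. Let $A\in\mathcal B$ and polynomials $\tilde{\mathbf a}_j$ ($j=\pm1,\dots,\pm(n-1)$), each relatively prime to $\mathbf p$, satisfy $A_j=\mathbf s_+(M)\tilde{\mathbf a}_j(M)$ for $j\ge1$ and $A_j=\mathbf s_-(M)\tilde{\mathbf a}_j(M)$ for $j\le-1$. For each $i=1,\dots,n-1$ choose $\boldsymbol\gamma_i\in\mathbb C[X]$ such that $\mathbf p$ divides $\boldsymbol\gamma_i\tilde{\mathbf a}_{i-n}-1$, and set $\boldsymbol\xi_i=\tilde{\mathbf a}_i\boldsymbol\gamma_i$. Then $\mathbf d$ divides $\boldsymbol\xi_i-\boldsymbol\xi_j$ for all $i,j\in\{1,\dots,n-1\}$.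
   Context: A nonderogatory matrix is one whose minimal polynomial equals its characteristic polynomial; $\mathcal P(M)$ is the algebra of polynomials in $M$; $\mathcal T_{n,d}[\mathcal P(M)]$ is the set of $n\times n$ block Toeplitz matrices $(B_{i-j})_{i,j=0}^{n-1}$ with all $B_m\in\mathcal P(M)$. A maximal subalgebra of $\mathcal T_{n,d}[\mathcal P(M)]$ is a subalgebra contained in it, maximal under inclusion. It is generic if it is contained neither in the set of such matrices with $B_i=0$ for all $i\ge1$ nor in the set with $B_i=0$ for all $i\le-1$. For $B\in\mathcal B$ write $B_j=\mathbf b_j(M)$; $\mathbf s_+$ is the greatest common divisor of $\mathbf p$ and all $\mathbf b_j$ with $j\ge1$, $B\in\mathcal B$, and $\mathbf s_-$ the greatest common divisor of $\mathbf p$ and all $\mathbf b_j$ with $j\le-1$, $B\in\mathcal B$ (these do not depend on $j$ and $\mathbf s_+\mathbf s_-$ divides $\mathbf p$). *)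

theory Defs
  imports "Jordan_Normal_Form.Char_Poly" "HOL-Computational_Algebra.Polynomial_Factorial" "HOL-Computational_Algebra.Field_as_Ring"
begin

definition poly_mat :: "complex poly \<Rightarrow> complex mat \<Rightarrow> complex mat" where
  "poly_mat q M = mat (dim_row M) (dim_col M)
     (\<lambda>(r,c). \<Sum>i\<le>degree q. coeff q i * (M ^\<^sub>m i) $$ (r,c))"

definition is_min_poly :: "complex mat \<Rightarrow> complex poly \<Rightarrow> bool" where
  "is_min_poly M p \<longleftrightarrow> monic p \<and> poly_mat p M = 0\<^sub>m (dim_row M) (dim_col M) \<and>
     (\<forall>q. poly_mat q M = 0\<^sub>m (dim_row M) (dim_col M) \<longrightarrow> p dvd q)"

definition polys_in :: "complex mat \<Rightarrow> complex mat set" where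
  "polys_in M = {poly_mat q M | q. True}"

(* T_{n,d}[P(M)] : nd x nd block Toeplitz matrices (B_{i-j}) with all B_m in P(M), d = dim_row M *)
definition toeplitz_set :: "nat \<Rightarrow> complex mat \<Rightarrow> complex mat set" where
  "toeplitz_set n M = (let d = dim_row M in
     {A. A \<in> carrier_mat (n*d) (n*d) \<and>
        (\<exists>B::int \<Rightarrow> complex mat. (\<forall>m. B m \<in> polys_in M) \<and>
           (\<forall>r < n*d. \<forall>c < n*d.
              A $$ (r,c) = B (int (r div d) - int (c div d)) $$ (r mod d, c mod d)))})"

(* the block A_m (m = i - j) of an nd x nd block Toeplitz matrix with d x d blocks *)
definition blk :: "nat \<Rightarrow> complex mat \<Rightarrow> int \<Rightarrow> complex mat" where
  "blk d A m = mat d d (\<lambda>(k,l). if m \<ge> 0 then A $$ (nat m * d + k, l)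
                                           else A $$ (k, nat (- m) * d + l))"

definition is_subalgebra :: "nat \<Rightarrow> complex mat set \<Rightarrow> bool" where
  "is_subalgebra N S \<longleftrightarrow> S \<subseteq> carrier_mat N N \<and> 0\<^sub>m N N \<in> S \<and>
     (\<forall>X\<in>S. \<forall>Y\<in>S. X + Y \<in> S \<and> X * Y \<in> S) \<and> (\<forall>c. \<forall>X\<in>S. c \<cdot>\<^sub>m X \<in> S)"

definition maximal_subalgebra_in :: "nat \<Rightarrow> complex mat set \<Rightarrow> complex mat set \<Rightarrow> bool" where
  "maximal_subalgebra_in N T S \<longleftrightarrow> is_subalgebra N S \<and> S \<subseteq> T \<and>
     (\<forall>S'. is_subalgebra N S' \<and> S' \<subseteq> T \<and> S \<subseteq> S' \<longrightarrow> S' = S)"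

definition generic :: "nat \<Rightarrow> nat \<Rightarrow> complex mat set \<Rightarrow> bool" where
  "generic n d S \<longleftrightarrow>
     \<not> (S \<subseteq> {A. \<forall>i\<in>{1..int n - 1}. blk d A i = 0\<^sub>m d d}) \<and>
     \<not> (S \<subseteq> {A. \<forall>i\<in>{1..int n - 1}. blk d A (- i) = 0\<^sub>m d d})"

definition s_plus :: "nat \<Rightarrow> complex mat \<Rightarrow> complex poly \<Rightarrow> complex mat set \<Rightarrow> complex poly" where
  "s_plus n M p S = Gcd (insert p {b. \<exists>B\<in>S. \<exists>j\<in>{1..int n - 1}. blk (dim_row M) B j = poly_mat b M})"

definition s_minus :: "nat \<Rightarrow> complex mat \<Rightarrow> complex poly \<Rightarrow> complex mat set \<Rightarrow> complex poly" where
  "s_minus n M p S = Gcd (insert p {b. \<exists>B\<in>S. \<exists>j\<in>{1..int n - 1}. blk (dim_row M) B (- j) = poly_mat b M})"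

end

theory Submission
  imports Defs
begin

(* Maximality forces s_+ s_- | p.  With h = p div s_-, the block Toeplitz matrices that vanish on
   and above the diagonal and have all blocks in h(M) P(M) are absorbed from both sides by the
   subalgebra (its blocks above the diagonal are multiples of s_-(M), and s_- h = p).  Adjoining
   them therefore gives a subalgebra of the Toeplitz algebra, which by maximality adds nothing;
   hence s_+ | h.
   Since A^2 is block Toeplitz, its blocks at positions (i - 1, n - 1 - j) and (i, n - j) agree,
   and their difference telescopes to A_i A_(j-n) - A_(i-n) A_j, so p divides it.  Substituting
   A_k = s_(+/-)(M) a_k(M) and multiplying by gamma_i gamma_j gives p | s_+ s_- (xi_i - xi_j);
   cancelling s_+ s_- gives the claim. *)

lemma dim_poly_mat [simp]:
  "dim_row (poly_mat q M) = dim_row M" "dim_col (poly_mat q M) = dim_col M"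
  unfolding poly_mat_def by auto

lemma poly_mat_carrier [simp]: "M \<in> carrier_mat d d \<Longrightarrow> poly_mat q M \<in> carrier_mat d d"
  unfolding poly_mat_def by auto

lemma index_poly_mat:
  assumes M: "M \<in> carrier_mat d d" and "r < d" "c < d" and N: "degree q \<le> N"
  shows "poly_mat q M $$ (r,c) = (\<Sum>i\<le>N. coeff q i * (M ^\<^sub>m i) $$ (r,c))"
proof -
  have "poly_mat q M $$ (r,c) = (\<Sum>i\<le>degree q. coeff q i * (M ^\<^sub>m i) $$ (r,c))"
    using assms unfolding poly_mat_def by auto
  also have "\<dots> = (\<Sum>i\<le>N. coeff q i * (M ^\<^sub>m i) $$ (r,c))"
    by (rule sum.mono_neutral_left) (use N in \<open>auto simp: coeff_eq_0\<close>)
  finally show ?thesis .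
qed

lemma poly_mat_0:
  assumes "M \<in> carrier_mat d d"
  shows "poly_mat 0 M = 0\<^sub>m d d"
  using assms by (intro eq_matI) (auto simp: poly_mat_def)

lemma poly_mat_const:
  assumes M: "M \<in> carrier_mat d d"
  shows "poly_mat [:a:] M = a \<cdot>\<^sub>m 1\<^sub>m d"
  by (rule eq_matI) (use M index_poly_mat[OF M, of _ _ "[:a:]" 0] in auto)

lemma poly_mat_add:
  assumes M: "M \<in> carrier_mat d d"
  shows "poly_mat (f + g) M = poly_mat f M + poly_mat g M"
proof (rule eq_matI)
  fix r c assume "r < dim_row (poly_mat f M + poly_mat g M)" "c < dim_col (poly_mat f M + poly_mat g M)"
  then have rc: "r < d" "c < d" using M by auto
  let ?N = "max (degree f) (degree g)"
  have "degree (f + g) \<le> ?N" by (rule degree_add_le) auto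
  from index_poly_mat[OF M rc this]
  show "poly_mat (f + g) M $$ (r, c) = (poly_mat f M + poly_mat g M) $$ (r, c)"
    using index_poly_mat[OF M rc, of f ?N] index_poly_mat[OF M rc, of g ?N] rc M
    by (simp add: sum.distrib distrib_right)
qed (use M in auto)

lemma poly_mat_diff:
  assumes M: "M \<in> carrier_mat d d"
  shows "poly_mat (f - g) M = poly_mat f M - poly_mat g M"
proof (rule eq_matI)
  fix r c assume "r < dim_row (poly_mat f M - poly_mat g M)" "c < dim_col (poly_mat f M - poly_mat g M)"
  then have rc: "r < d" "c < d" using M by auto
  let ?N = "max (degree f) (degree g)"
  have "degree (f - g) \<le> ?N" by (rule degree_diff_le) auto
  from index_poly_mat[OF M rc this]
  show "poly_mat (f - g) M $$ (r, c) = (poly_mat f M - poly_mat g M) $$ (r, c)"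
    using index_poly_mat[OF M rc, of f ?N] index_poly_mat[OF M rc, of g ?N] rc M
    by (simp add: sum_subtractf left_diff_distrib)
qed (use M in auto)

lemma poly_mat_smult:
  assumes M: "M \<in> carrier_mat d d"
  shows "poly_mat (Polynomial.smult a f) M = a \<cdot>\<^sub>m poly_mat f M"
proof (rule eq_matI)
  fix r c assume "r < dim_row (a \<cdot>\<^sub>m poly_mat f M)" "c < dim_col (a \<cdot>\<^sub>m poly_mat f M)"
  then have rc: "r < d" "c < d" using M by auto
  show "poly_mat (Polynomial.smult a f) M $$ (r, c) = (a \<cdot>\<^sub>m poly_mat f M) $$ (r, c)"
    using rc M index_poly_mat[OF M rc, of "Polynomial.smult a f" "degree f"]
      index_poly_mat[OF M rc, of f "degree f"]
    by (simp add: sum_distrib_left mult.assoc)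
qed (use M in auto)

lemma poly_mat_pCons_0:
  assumes M: "M \<in> carrier_mat d d"
  shows "poly_mat (pCons 0 f) M = poly_mat f M * M"
proof (rule eq_matI)
  fix r c assume "r < dim_row (poly_mat f M * M)" "c < dim_col (poly_mat f M * M)"
  then have rc: "r < d" "c < d" using M by auto
  let ?N = "degree f"
  have deg: "degree (pCons 0 f) \<le> Suc ?N" by simp
  have "poly_mat (pCons 0 f) M $$ (r, c) = (\<Sum>i\<le>?N. coeff f i * (M ^\<^sub>m Suc i) $$ (r,c))"
    unfolding index_poly_mat[OF M rc deg] sum.atMost_Suc_shift by simp
  also have "\<dots> = (\<Sum>i\<le>?N. coeff f i * (\<Sum>s<d. (M ^\<^sub>m i) $$ (r,s) * M $$ (s,c)))"
    using M rc by (auto intro!: sum.cong simp: scalar_prod_def atLeast0LessThan)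
  also have "\<dots> = (\<Sum>s<d. (\<Sum>i\<le>?N. coeff f i * (M ^\<^sub>m i) $$ (r,s)) * M $$ (s,c))"
    by (simp add: sum_distrib_left sum_distrib_right mult.assoc) (rule sum.swap)
  also have "\<dots> = (poly_mat f M * M) $$ (r,c)"
    using M rc index_poly_mat[OF M rc(1), of _ f ?N]
    by (auto intro!: sum.cong simp: scalar_prod_def atLeast0LessThan)
  finally show "poly_mat (pCons 0 f) M $$ (r, c) = (poly_mat f M * M) $$ (r, c)" .
qed (use M in auto)

lemma poly_mat_mult:
  assumes M: "M \<in> carrier_mat d d"
  shows "poly_mat (f * g) M = poly_mat f M * poly_mat g M"
proof (induction g)
  case 0
  then show ?case using M by (simp add: poly_mat_0[OF M])
next
  case (pCons a g)
  have F: "poly_mat f M \<in> carrier_mat d d" and G: "poly_mat g M \<in> carrier_mat d d" using M by auto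
  have "poly_mat (f * pCons a g) M = a \<cdot>\<^sub>m poly_mat f M + poly_mat f M * poly_mat g M * M"
    by (simp add: poly_mat_add[OF M] poly_mat_smult[OF M] poly_mat_pCons_0[OF M] pCons.IH)
  also have "\<dots> = poly_mat f M * (a \<cdot>\<^sub>m 1\<^sub>m d) + poly_mat f M * (poly_mat g M * M)"
    using F by (simp add: assoc_mult_mat[OF F G M] mult_smult_distrib[OF F one_carrier_mat]
        right_mult_one_mat[OF F])
  also have "\<dots> = poly_mat f M * (a \<cdot>\<^sub>m 1\<^sub>m d + poly_mat g M * M)"
    by (rule mult_add_distrib_mat[symmetric]) (use F G M in auto)
  also have "a \<cdot>\<^sub>m 1\<^sub>m d + poly_mat g M * M = poly_mat (pCons a g) M"
    using poly_mat_add[OF M, of "[:a:]" "pCons 0 g"]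
    by (simp add: poly_mat_const[OF M] poly_mat_pCons_0[OF M])
  finally show ?case .
qed

lemma index_poly_mat_sum:
  assumes M: "M \<in> carrier_mat d d" and "r < d" "c < d"
  shows "poly_mat (\<Sum>k\<in>K. f k) M $$ (r,c) = (\<Sum>k\<in>K. poly_mat (f k) M $$ (r,c))"
  by (induction K rule: infinite_finite_induct)
    (use assms in \<open>simp_all add: poly_mat_0[OF M] poly_mat_add[OF M]\<close>)

lemma poly_mat_eq_0_iff:
  assumes M: "M \<in> carrier_mat d d" and minp: "is_min_poly M p"
  shows "poly_mat q M = 0\<^sub>m d d \<longleftrightarrow> p dvd q"
proof
  assume "p dvd q"
  then obtain r where "q = p * r" by blast
  moreover have "poly_mat p M = 0\<^sub>m d d" using minp M unfolding is_min_poly_def by auto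
  ultimately show "poly_mat q M = 0\<^sub>m d d"
    using M by (simp add: poly_mat_mult[OF M] left_mult_zero_mat[of _ d d])
qed (use minp M in \<open>auto simp: is_min_poly_def\<close>)

lemma poly_mat_eq_iff_dvd:
  assumes M: "M \<in> carrier_mat d d" and minp: "is_min_poly M p"
  shows "poly_mat f M = poly_mat g M \<longleftrightarrow> p dvd f - g"
proof -
  have "poly_mat f M = poly_mat g M \<longleftrightarrow> poly_mat f M - poly_mat g M = 0\<^sub>m d d"
    using M by (auto simp: mat_eq_iff)
  then show ?thesis by (simp add: poly_mat_diff[OF M, symmetric] poly_mat_eq_0_iff[OF M minp])
qed

lemma sum_lessThan_mult_blocks:
  fixes g :: "nat \<Rightarrow> 'a::comm_monoid_add"
  shows "(\<Sum>t<n*d. g t) = (\<Sum>k<n. \<Sum>l<d. g (k*d + l))"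
proof -
  have "(\<Sum>t<n*d. g t) = (\<Sum>k<n. sum g {k*d..<k*d+d})"
    using sum.nat_group[of g d n] by (simp add: mult.commute)
  also have "\<dots> = (\<Sum>k<n. \<Sum>l<d. g (k*d + l))"
  proof (rule sum.cong[OF refl])
    fix k
    show "sum g {k*d..<k*d+d} = (\<Sum>l<d. g (k*d + l))"
      using sum.shift_bounds_nat_ivl[of g 0 "k*d" d] by (simp add: atLeast0LessThan add.commute)
  qed
  finally show ?thesis .
qed

lemma block_index_less:
  fixes u n l d :: nat
  assumes "u < n" and "l < d"
  shows "u * d + l < n * d"
proof -
  have "Suc u * d \<le> n * d" using assms(1) by (intro mult_right_mono) auto
  then show ?thesis using assms(2) by simp
qed

definition block_toeplitz :: "nat \<Rightarrow> complex mat \<Rightarrow> (int \<Rightarrow> complex poly) \<Rightarrow> complex mat" where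
  "block_toeplitz n M b = mat (n * dim_row M) (n * dim_row M)
     (\<lambda>(r,s). poly_mat (b (int (r div dim_row M) - int (s div dim_row M))) M
                 $$ (r mod dim_row M, s mod dim_row M))"

lemma dim_block_toeplitz [simp]:
  "dim_row (block_toeplitz n M b) = n * dim_row M" "dim_col (block_toeplitz n M b) = n * dim_row M"
  unfolding block_toeplitz_def by auto

lemma block_toeplitz_carrier [simp]:
  "M \<in> carrier_mat d d \<Longrightarrow> block_toeplitz n M b \<in> carrier_mat (n*d) (n*d)"
  unfolding block_toeplitz_def by auto

lemma index_block_toeplitz:
  assumes "M \<in> carrier_mat d d" and "r < n*d" "s < n*d"
  shows "block_toeplitz n M b $$ (r,s) =
    poly_mat (b (int (r div d) - int (s div d))) M $$ (r mod d, s mod d)"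
  using assms unfolding block_toeplitz_def by auto

lemma block_toeplitz_mem_toeplitz_set:
  assumes M: "M \<in> carrier_mat d d"
  shows "block_toeplitz n M b \<in> toeplitz_set n M"
  unfolding toeplitz_set_def Let_def
  using M index_block_toeplitz[OF M]
  by (auto intro!: exI[of _ "\<lambda>m. poly_mat (b m) M"] simp: polys_in_def)

lemma toeplitz_setE:
  assumes M: "M \<in> carrier_mat d d" and X: "X \<in> toeplitz_set n M"
  obtains b where "X = block_toeplitz n M b"
proof -
  from X M obtain B where XC: "X \<in> carrier_mat (n*d) (n*d)" and B: "\<forall>m. B m \<in> polys_in M"
    and XB: "\<forall>r < n*d. \<forall>c < n*d. X $$ (r,c) = B (int (r div d) - int (c div d)) $$ (r mod d, c mod d)"
    unfolding toeplitz_set_def Let_def by auto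
  from B have "\<forall>m. \<exists>q. B m = poly_mat q M" unfolding polys_in_def by auto
  then obtain b where b: "\<And>m. B m = poly_mat (b m) M" by metis
  have "X = block_toeplitz n M b"
    by (rule eq_matI) (use XC XB M in \<open>auto simp: index_block_toeplitz[OF M] b\<close>)
  then show thesis by (rule that)
qed

lemma blk_block_toeplitz:
  assumes M: "M \<in> carrier_mat d d" and m: "- int n < m" "m < int n"
  shows "blk d (block_toeplitz n M b) m = poly_mat (b m) M"
proof (rule eq_matI)
  fix k l assume "k < dim_row (poly_mat (b m) M)" "l < dim_col (poly_mat (b m) M)"
  then have kl: "k < d" "l < d" using M by auto
  have n: "0 < n" using m by linarith
  show "blk d (block_toeplitz n M b) m $$ (k, l) = poly_mat (b m) M $$ (k, l)"
  proof (cases "m \<ge> 0")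
    case True
    have "nat m * d + k < n * d" by (rule block_index_less) (use True m kl in auto)
    moreover have "l < n * d" using block_index_less[OF n kl(2)] by simp
    ultimately show ?thesis using True kl M unfolding blk_def by (simp add: index_block_toeplitz[OF M])
  next
    case False
    have "nat (- m) * d + l < n * d" by (rule block_index_less) (use False m kl in auto)
    moreover have "k < n * d" using block_index_less[OF n kl(1)] by simp
    ultimately show ?thesis using False kl M unfolding blk_def by (simp add: index_block_toeplitz[OF M])
  qed
qed (use M in \<open>auto simp: blk_def\<close>)

lemma block_toeplitz_add:
  assumes M: "M \<in> carrier_mat d d"
  shows "block_toeplitz n M b + block_toeplitz n M c = block_toeplitz n M (\<lambda>m. b m + c m)"
proof (rule eq_matI)
  fix r s assume "r < dim_row (block_toeplitz n M (\<lambda>m. b m + c m))"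
    "s < dim_col (block_toeplitz n M (\<lambda>m. b m + c m))"
  then have rs: "r < n*d" "s < n*d" using M by auto
  then have "0 < d" by (cases d) auto
  with rs M show "(block_toeplitz n M b + block_toeplitz n M c) $$ (r, s) =
      block_toeplitz n M (\<lambda>m. b m + c m) $$ (r, s)"
    by (simp add: index_block_toeplitz[OF M] poly_mat_add[OF M])
qed (use M in auto)

lemma block_toeplitz_smult:
  assumes M: "M \<in> carrier_mat d d"
  shows "a \<cdot>\<^sub>m block_toeplitz n M b = block_toeplitz n M (\<lambda>m. Polynomial.smult a (b m))"
proof (rule eq_matI)
  fix r s assume "r < dim_row (block_toeplitz n M (\<lambda>m. Polynomial.smult a (b m)))"
    "s < dim_col (block_toeplitz n M (\<lambda>m. Polynomial.smult a (b m)))"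
  then have rs: "r < n*d" "s < n*d" using M by auto
  then have "0 < d" by (cases d) auto
  with rs M show "(a \<cdot>\<^sub>m block_toeplitz n M b) $$ (r, s) =
      block_toeplitz n M (\<lambda>m. Polynomial.smult a (b m)) $$ (r, s)"
    by (simp add: index_block_toeplitz[OF M] poly_mat_smult[OF M])
qed (use M in auto)

lemma block_toeplitz_0:
  assumes M: "M \<in> carrier_mat d d"
  shows "block_toeplitz n M (\<lambda>m. 0) = 0\<^sub>m (n*d) (n*d)"
proof (rule eq_matI)
  fix r s assume "r < dim_row (0\<^sub>m (n*d) (n*d))" "s < dim_col (0\<^sub>m (n*d) (n*d))"
  then have rs: "r < n*d" "s < n*d" by auto
  then have "0 < d" by (cases d) auto
  with rs show "block_toeplitz n M (\<lambda>m. 0) $$ (r, s) = 0\<^sub>m (n * d) (n * d) $$ (r, s)"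
    by (simp add: index_block_toeplitz[OF M] poly_mat_0[OF M])
qed (use M in auto)

lemma index_block_toeplitz_mult:
  assumes M: "M \<in> carrier_mat d d" and r: "r < n*d" and s: "s < n*d"
  shows "(block_toeplitz n M b * block_toeplitz n M c) $$ (r,s) =
    poly_mat (\<Sum>k<n. b (int (r div d) - int k) * c (int k - int (s div d))) M $$ (r mod d, s mod d)"
proof -
  have d: "0 < d" using r by (cases d) auto
  have rs: "r mod d < d" "s mod d < d" using d by auto
  have "(block_toeplitz n M b * block_toeplitz n M c) $$ (r,s) =
      (\<Sum>t<n*d. block_toeplitz n M b $$ (r,t) * block_toeplitz n M c $$ (t,s))"
    using M r s by (simp add: scalar_prod_def atLeast0LessThan)
  also have "\<dots> = (\<Sum>k<n. \<Sum>l<d. block_toeplitz n M b $$ (r,k*d+l) * block_toeplitz n M c $$ (k*d+l,s))"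
    by (rule sum_lessThan_mult_blocks)
  also have "\<dots> = (\<Sum>k<n. \<Sum>l<d. poly_mat (b (int (r div d) - int k)) M $$ (r mod d, l) *
       poly_mat (c (int k - int (s div d))) M $$ (l, s mod d))"
  proof (intro sum.cong refl)
    fix k l assume "k \<in> {..<n}" "l \<in> {..<d}"
    then have kl: "k*d + l < n*d" and "(k*d+l) div d = k" "(k*d+l) mod d = l"
      using block_index_less[of k n l d] by auto
    then show "block_toeplitz n M b $$ (r,k*d+l) * block_toeplitz n M c $$ (k*d+l,s) =
      poly_mat (b (int (r div d) - int k)) M $$ (r mod d, l) *
      poly_mat (c (int k - int (s div d))) M $$ (l, s mod d)"
      using index_block_toeplitz[OF M r kl] index_block_toeplitz[OF M kl s] by simp
  qed
  also have "\<dots> = (\<Sum>k<n. poly_mat (b (int (r div d) - int k) * c (int k - int (s div d))) M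
                        $$ (r mod d, s mod d))"
    using M rs by (simp add: poly_mat_mult[OF M] scalar_prod_def atLeast0LessThan)
  also have "\<dots> = poly_mat (\<Sum>k<n. b (int (r div d) - int k) * c (int k - int (s div d))) M
                        $$ (r mod d, s mod d)"
    by (rule index_poly_mat_sum[OF M rs, symmetric])
  finally show ?thesis .
qed

lemma block_toeplitz_mult_eq_iff:
  assumes M: "M \<in> carrier_mat d d" and minp: "is_min_poly M p"
  shows "block_toeplitz n M b * block_toeplitz n M c = block_toeplitz n M e \<longleftrightarrow>
    (\<forall>u<n. \<forall>v<n. p dvd (\<Sum>k<n. b (int u - int k) * c (int k - int v)) - e (int u - int v))"
  (is "?prod = _ \<longleftrightarrow> (\<forall>u<n. \<forall>v<n. p dvd ?conv u v - _)")
proof (intro iffI allI impI)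
  fix u v assume eq: "?prod = block_toeplitz n M e" and u: "u < n" and v: "v < n"
  have "poly_mat (?conv u v) M = poly_mat (e (int u - int v)) M"
  proof (rule eq_matI)
    fix k l assume "k < dim_row (poly_mat (e (int u - int v)) M)" "l < dim_col (poly_mat (e (int u - int v)) M)"
    then have kl: "k < d" "l < d" using M by auto
    have r: "u*d + k < n*d" and s: "v*d + l < n*d"
      using block_index_less[OF u kl(1)] block_index_less[OF v kl(2)] by auto
    have "?prod $$ (u*d + k, v*d + l) = block_toeplitz n M e $$ (u*d + k, v*d + l)" using eq by simp
    then show "poly_mat (?conv u v) M $$ (k, l) = poly_mat (e (int u - int v)) M $$ (k, l)"
      unfolding index_block_toeplitz_mult[OF M r s] index_block_toeplitz[OF M r s] using kl by simp
  qed (use M in auto)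
  then show "p dvd ?conv u v - e (int u - int v)" by (simp add: poly_mat_eq_iff_dvd[OF M minp])
next
  assume conv: "\<forall>u<n. \<forall>v<n. p dvd ?conv u v - e (int u - int v)"
  show "?prod = block_toeplitz n M e"
  proof (rule eq_matI)
    fix r s assume "r < dim_row (block_toeplitz n M e)" "s < dim_col (block_toeplitz n M e)"
    then have r: "r < n*d" and s: "s < n*d" using M by auto
    then have "0 < d" by (cases d) auto
    have "r div d < n" "s div d < n" using r s by (auto simp: less_mult_imp_div_less)
    then have "poly_mat (?conv (r div d) (s div d)) M = poly_mat (e (int (r div d) - int (s div d))) M"
      using conv by (simp add: poly_mat_eq_iff_dvd[OF M minp])
    then show "?prod $$ (r, s) = block_toeplitz n M e $$ (r, s)"
      unfolding index_block_toeplitz_mult[OF M r s] index_block_toeplitz[OF M r s] by simp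
  qed (use M in auto)
qed

lemma block_toeplitz_mult_relation:
  assumes M: "M \<in> carrier_mat d d" and minp: "is_min_poly M p"
    and prod: "block_toeplitz n M b * block_toeplitz n M c \<in> toeplitz_set n M"
    and i: "1 \<le> i" "i < int n" and j: "1 \<le> j" "j < int n"
  shows "p dvd b i * c (j - int n) - b (i - int n) * c j"
proof -
  obtain e where "block_toeplitz n M b * block_toeplitz n M c = block_toeplitz n M e"
    using toeplitz_setE[OF M prod] .
  then have conv: "\<And>u v. u < n \<Longrightarrow> v < n \<Longrightarrow>
      p dvd (\<Sum>k<n. b (int u - int k) * c (int k - int v)) - e (int u - int v)"
    by (simp add: block_toeplitz_mult_eq_iff[OF M minp])
  define f where "f k = b (i - int k) * c (int k + j - int n)" for k :: nat
  have "p dvd (\<Sum>k<n. f k) - e (i + j - int n)"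
    using conv[of "nat i" "nat (int n - j)"] i j by (simp add: f_def algebra_simps)
  moreover have "p dvd (\<Sum>k<n. f (Suc k)) - e (i + j - int n)"
    using conv[of "nat (i - 1)" "nat (int n - 1 - j)"] i j by (simp add: f_def algebra_simps)
  ultimately have "p dvd ((\<Sum>k<n. f k) - e (i + j - int n))
      - ((\<Sum>k<n. f (Suc k)) - e (i + j - int n))"
    by (rule dvd_diff)
  then have "p dvd (\<Sum>k<n. f k - f (Suc k))" by (simp add: sum_subtractf)
  then show ?thesis unfolding sum_lessThan_telescope' by (simp add: f_def)
qed

definition lower_toeplitz_ideal :: "nat \<Rightarrow> complex mat \<Rightarrow> complex poly \<Rightarrow> complex mat set" where
  "lower_toeplitz_ideal n M h =
     {block_toeplitz n M c | c. (\<forall>m\<le>0. c m = 0) \<and> (\<forall>m. h dvd c m)}"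

lemma block_toeplitz_mult_lower:
  assumes M: "M \<in> carrier_mat d d" and minp: "is_min_poly M p" and p: "s * h = p"
    and upper: "\<And>j. 1 \<le> j \<Longrightarrow> j < int n \<Longrightarrow> s dvd \<beta> (- j)"
    and lower: "\<And>m. m \<le> 0 \<Longrightarrow> c m = 0" and h: "\<And>m. h dvd c m"
  shows "block_toeplitz n M \<beta> * block_toeplitz n M c =
           block_toeplitz n M (\<lambda>m. \<Sum>l\<in>{1..m}. \<beta> (m - l) * c l)"
  unfolding block_toeplitz_mult_eq_iff[OF M minp]
proof (intro allI impI)
  fix u v assume u: "u < n" and v: "v < n"
  define t where "t k = \<beta> (int u - int k) * c (int k - int v)" for k
  define K where "K = {k. v < k \<and> k \<le> u}"
  have K: "K \<subseteq> {..<n}" using u by (auto simp: K_def)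
  have "p dvd t k" if "k \<in> {..<n} - K" for k
  proof (cases "k \<le> v")
    case False
    then have "u < k" "k < n" using that by (auto simp: K_def)
    then have "s dvd \<beta> (int u - int k)" using upper[of "int k - int u"] by simp
    then show ?thesis unfolding t_def p[symmetric] by (rule mult_dvd_mono) (rule h)
  qed (simp add: t_def lower)
  then have "p dvd (\<Sum>k\<in>{..<n} - K. t k)" by (rule dvd_sum)
  moreover have "(\<Sum>k\<in>K. t k) = (\<Sum>l\<in>{1..int u - int v}. \<beta> (int u - int v - l) * c l)"
    by (rule sum.reindex_bij_witness[where i = "\<lambda>l. nat (l + int v)" and j = "\<lambda>k. int k - int v"])
      (auto simp: K_def t_def)
  moreover have "(\<Sum>k<n. t k) = (\<Sum>k\<in>{..<n} - K. t k) + (\<Sum>k\<in>K. t k)"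
    by (rule sum.subset_diff[OF K]) simp
  ultimately show "p dvd (\<Sum>k<n. \<beta> (int u - int k) * c (int k - int v))
      - (\<Sum>l\<in>{1..int u - int v}. \<beta> (int u - int v - l) * c l)"
    unfolding t_def by simp
qed

lemma lower_mult_block_toeplitz:
  assumes M: "M \<in> carrier_mat d d" and minp: "is_min_poly M p" and p: "s * h = p"
    and upper: "\<And>j. 1 \<le> j \<Longrightarrow> j < int n \<Longrightarrow> s dvd \<beta> (- j)"
    and lower: "\<And>m. m \<le> 0 \<Longrightarrow> c m = 0" and h: "\<And>m. h dvd c m"
  shows "block_toeplitz n M c * block_toeplitz n M \<beta> =
           block_toeplitz n M (\<lambda>m. \<Sum>l\<in>{1..m}. c l * \<beta> (m - l))"
  unfolding block_toeplitz_mult_eq_iff[OF M minp]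
proof (intro allI impI)
  fix u v assume u: "u < n" and v: "v < n"
  define t where "t k = c (int u - int k) * \<beta> (int k - int v)" for k
  define K where "K = {k. v \<le> k \<and> k < u}"
  have K: "K \<subseteq> {..<n}" using u by (auto simp: K_def)
  have "p dvd t k" if "k \<in> {..<n} - K" for k
  proof (cases "u \<le> k")
    case False
    then have "k < v" using that by (auto simp: K_def)
    then have "s dvd \<beta> (int k - int v)" using upper[of "int v - int k"] v by simp
    then show ?thesis unfolding t_def p[symmetric] by (subst mult.commute) (rule mult_dvd_mono[OF _ h])
  qed (simp add: t_def lower)
  then have "p dvd (\<Sum>k\<in>{..<n} - K. t k)" by (rule dvd_sum)
  moreover have "(\<Sum>k\<in>K. t k) = (\<Sum>l\<in>{1..int u - int v}. c l * \<beta> (int u - int v - l))"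
    by (rule sum.reindex_bij_witness[where i = "\<lambda>l. nat (int u - l)" and j = "\<lambda>k. int u - int k"])
      (auto simp: K_def t_def)
  moreover have "(\<Sum>k<n. t k) = (\<Sum>k\<in>{..<n} - K. t k) + (\<Sum>k\<in>K. t k)"
    by (rule sum.subset_diff[OF K]) simp
  ultimately show "p dvd (\<Sum>k<n. c (int u - int k) * \<beta> (int k - int v))
      - (\<Sum>l\<in>{1..int u - int v}. c l * \<beta> (int u - int v - l))"
    unfolding t_def by simp
qed

lemma lower_toeplitz_ideal_mult:
  assumes M: "M \<in> carrier_mat d d" and minp: "is_min_poly M p" and p: "s * h = p"
    and upper: "\<And>j. 1 \<le> j \<Longrightarrow> j < int n \<Longrightarrow> s dvd \<beta> (- j)"
    and Y: "Y \<in> lower_toeplitz_ideal n M h"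
  shows "block_toeplitz n M \<beta> * Y \<in> lower_toeplitz_ideal n M h"
    and "Y * block_toeplitz n M \<beta> \<in> lower_toeplitz_ideal n M h"
proof -
  obtain c where Y: "Y = block_toeplitz n M c" and lower: "\<And>m. m \<le> 0 \<Longrightarrow> c m = 0"
    and h: "\<And>m. h dvd c m"
    using Y unfolding lower_toeplitz_ideal_def by blast
  have "block_toeplitz n M \<beta> * Y = block_toeplitz n M (\<lambda>m. \<Sum>l\<in>{1..m}. \<beta> (m - l) * c l)"
    unfolding Y by (rule block_toeplitz_mult_lower[where \<beta>=\<beta> and c=c, OF M minp p upper lower h])
  then show "block_toeplitz n M \<beta> * Y \<in> lower_toeplitz_ideal n M h"
    unfolding lower_toeplitz_ideal_def by (auto intro!: dvd_sum dvd_mult h)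
  have "Y * block_toeplitz n M \<beta> = block_toeplitz n M (\<lambda>m. \<Sum>l\<in>{1..m}. c l * \<beta> (m - l))"
    unfolding Y by (rule lower_mult_block_toeplitz[where \<beta>=\<beta> and c=c, OF M minp p upper lower h])
  then show "Y * block_toeplitz n M \<beta> \<in> lower_toeplitz_ideal n M h"
    unfolding lower_toeplitz_ideal_def by (auto intro!: dvd_sum dvd_mult2 h)
qed

lemma is_subalgebra_lower_toeplitz_ideal:
  assumes M: "M \<in> carrier_mat d d" and minp: "is_min_poly M p" and h: "h dvd p"
  shows "is_subalgebra (n*d) (lower_toeplitz_ideal n M h)"
  unfolding is_subalgebra_def
proof (intro conjI ballI allI)
  show "lower_toeplitz_ideal n M h \<subseteq> carrier_mat (n*d) (n*d)"
    using M by (auto simp: lower_toeplitz_ideal_def)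
  show "0\<^sub>m (n*d) (n*d) \<in> lower_toeplitz_ideal n M h"
    unfolding lower_toeplitz_ideal_def block_toeplitz_0[OF M, symmetric] by auto
next
  fix Y1 Y2 assume Y1: "Y1 \<in> lower_toeplitz_ideal n M h" and Y2: "Y2 \<in> lower_toeplitz_ideal n M h"
  obtain c1 where c1: "Y1 = block_toeplitz n M c1" "\<forall>m\<le>0. c1 m = 0" "\<forall>m. h dvd c1 m"
    using Y1 unfolding lower_toeplitz_ideal_def by blast
  obtain c2 where "Y2 = block_toeplitz n M c2" "\<forall>m\<le>0. c2 m = 0" "\<forall>m. h dvd c2 m"
    using Y2 unfolding lower_toeplitz_ideal_def by blast
  with c1 show "Y1 + Y2 \<in> lower_toeplitz_ideal n M h"
    unfolding lower_toeplitz_ideal_def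
    by (intro CollectI exI[of _ "\<lambda>m. c1 m + c2 m"]) (auto simp: block_toeplitz_add[OF M])
  have "p div h * h = p" using h by simp
  then show "Y1 * Y2 \<in> lower_toeplitz_ideal n M h"
    using lower_toeplitz_ideal_mult(1)[OF M minp _ _ Y2, of "p div h" c1] c1 by simp
next
  fix a Y assume "Y \<in> lower_toeplitz_ideal n M h"
  then obtain c where "Y = block_toeplitz n M c" "\<forall>m\<le>0. c m = 0" "\<forall>m. h dvd c m"
    unfolding lower_toeplitz_ideal_def by blast
  then show "a \<cdot>\<^sub>m Y \<in> lower_toeplitz_ideal n M h"
    unfolding lower_toeplitz_ideal_def
    by (intro CollectI exI[of _ "\<lambda>m. Polynomial.smult a (c m)"])
      (auto simp: block_toeplitz_smult[OF M] dvd_smult)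
qed

lemma lower_toeplitz_ideal_subset:
  "M \<in> carrier_mat d d \<Longrightarrow> lower_toeplitz_ideal n M h \<subseteq> toeplitz_set n M"
  unfolding lower_toeplitz_ideal_def using block_toeplitz_mem_toeplitz_set by blast

lemma is_subalgebra_add_ideal:
  assumes S: "is_subalgebra N S" and J: "is_subalgebra N J"
    and ideal: "\<And>X Y. X \<in> S \<Longrightarrow> Y \<in> J \<Longrightarrow> X * Y \<in> J \<and> Y * X \<in> J"
  shows "is_subalgebra N {X + Y | X Y. X \<in> S \<and> Y \<in> J}"
  unfolding is_subalgebra_def
proof (intro conjI ballI allI)
  have Scar: "S \<subseteq> carrier_mat N N" and Jcar: "J \<subseteq> carrier_mat N N"
    using S J unfolding is_subalgebra_def by auto
  then show "{X + Y | X Y. X \<in> S \<and> Y \<in> J} \<subseteq> carrier_mat N N" by auto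
  have "0\<^sub>m N N + 0\<^sub>m N N \<in> {X + Y | X Y. X \<in> S \<and> Y \<in> J}"
    using S J unfolding is_subalgebra_def by blast
  then show "0\<^sub>m N N \<in> {X + Y | X Y. X \<in> S \<and> Y \<in> J}" by simp
  fix Z1 Z2 assume "Z1 \<in> {X + Y | X Y. X \<in> S \<and> Y \<in> J}" "Z2 \<in> {X + Y | X Y. X \<in> S \<and> Y \<in> J}"
  then obtain X1 Y1 X2 Y2 where Z: "Z1 = X1 + Y1" "Z2 = X2 + Y2"
    and XY: "X1 \<in> S" "Y1 \<in> J" "X2 \<in> S" "Y2 \<in> J" by blast
  then have C: "X1 \<in> carrier_mat N N" "Y1 \<in> carrier_mat N N" "X2 \<in> carrier_mat N N" "Y2 \<in> carrier_mat N N"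
    using Scar Jcar by auto
  have "Z1 + Z2 = (X1 + X2) + (Y1 + Y2)"
    unfolding Z using C by (auto simp: assoc_add_mat[of _ N N] comm_add_mat[of _ N N])
  moreover have "X1 + X2 \<in> S" "Y1 + Y2 \<in> J" using S J XY unfolding is_subalgebra_def by auto
  ultimately show "Z1 + Z2 \<in> {X + Y | X Y. X \<in> S \<and> Y \<in> J}" by blast
  have "Z1 * Z2 = X1 * X2 + (Y1 * X2 + (X1 * Y2 + Y1 * Y2))"
    unfolding Z using C by (simp add: add_mult_distrib_mat[of _ N N] mult_add_distrib_mat[of _ N N]
        assoc_add_mat[of _ N N])
  moreover have "X1 * X2 \<in> S" using S XY unfolding is_subalgebra_def by auto
  moreover have "Y1 * X2 + (X1 * Y2 + Y1 * Y2) \<in> J"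
  proof -
    have "Y1 * X2 \<in> J" "X1 * Y2 \<in> J" using ideal XY by auto
    moreover have "Y1 * Y2 \<in> J" using J XY unfolding is_subalgebra_def by blast
    ultimately show ?thesis using J unfolding is_subalgebra_def by blast
  qed
  ultimately show "Z1 * Z2 \<in> {X + Y | X Y. X \<in> S \<and> Y \<in> J}" by blast
next
  fix a Z assume "Z \<in> {X + Y | X Y. X \<in> S \<and> Y \<in> J}"
  then obtain X Y where "Z = X + Y" "X \<in> S" "Y \<in> J" by blast
  moreover have "X \<in> carrier_mat N N" "Y \<in> carrier_mat N N"
    using S J \<open>X \<in> S\<close> \<open>Y \<in> J\<close> unfolding is_subalgebra_def by auto
  ultimately have "a \<cdot>\<^sub>m Z = a \<cdot>\<^sub>m X + a \<cdot>\<^sub>m Y" "a \<cdot>\<^sub>m X \<in> S" "a \<cdot>\<^sub>m Y \<in> J"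
    using S J add_smult_distrib_left_mat unfolding is_subalgebra_def by auto
  then show "a \<cdot>\<^sub>m Z \<in> {X + Y | X Y. X \<in> S \<and> Y \<in> J}" by blast
qed

lemma s_plus_dvd_lower_block:
  assumes M: "M \<in> carrier_mat d d" and B: "block_toeplitz n M \<beta> \<in> S" and j: "1 \<le> j" "j < int n"
  shows "s_plus n M p S dvd \<beta> j"
proof -
  have "blk (dim_row M) (block_toeplitz n M \<beta>) j = poly_mat (\<beta> j) M"
    using M j by (simp add: blk_block_toeplitz[OF M])
  then show ?thesis unfolding s_plus_def using B j by (intro Gcd_dvd) auto
qed

lemma s_minus_dvd_upper_block:
  assumes M: "M \<in> carrier_mat d d" and B: "block_toeplitz n M \<beta> \<in> S" and j: "1 \<le> j" "j < int n"
  shows "s_minus n M p S dvd \<beta> (- j)"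
proof -
  have "blk (dim_row M) (block_toeplitz n M \<beta>) (- j) = poly_mat (\<beta> (- j)) M"
    using M j by (simp add: blk_block_toeplitz[OF M])
  then show ?thesis unfolding s_minus_def using B j by (intro Gcd_dvd) auto
qed

lemma maximal_subalgebra_absorbs_ideal:
  assumes maxS: "maximal_subalgebra_in N T S" and J: "is_subalgebra N J"
    and ideal: "\<And>X Y. X \<in> S \<Longrightarrow> Y \<in> J \<Longrightarrow> X * Y \<in> J \<and> Y * X \<in> J"
    and sum: "{X + Y | X Y. X \<in> S \<and> Y \<in> J} \<subseteq> T"
  shows "J \<subseteq> S"
proof -
  let ?S' = "{X + Y | X Y. X \<in> S \<and> Y \<in> J}"
  have S: "is_subalgebra N S" using maxS unfolding maximal_subalgebra_in_def by blast
  have "S \<subseteq> ?S'"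
  proof
    fix X assume "X \<in> S"
    moreover have "X = X + 0\<^sub>m N N" using \<open>X \<in> S\<close> S by (auto simp: is_subalgebra_def)
    moreover have "0\<^sub>m N N \<in> J" using J by (simp add: is_subalgebra_def)
    ultimately show "X \<in> ?S'" by blast
  qed
  with maxS sum is_subalgebra_add_ideal[OF S J ideal] have "?S' = S"
    unfolding maximal_subalgebra_in_def by blast
  moreover have "J \<subseteq> ?S'"
  proof
    fix Y assume "Y \<in> J"
    moreover have "Y = 0\<^sub>m N N + Y" using \<open>Y \<in> J\<close> J by (auto simp: is_subalgebra_def)
    moreover have "0\<^sub>m N N \<in> S" using S by (simp add: is_subalgebra_def)
    ultimately show "Y \<in> ?S'" by blast
  qed
  ultimately show ?thesis by simp
qed

lemma lower_toeplitz_ideal_subset_maximal_subalgebra: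
  assumes M: "M \<in> carrier_mat d d" and minp: "is_min_poly M p"
    and maxS: "maximal_subalgebra_in (n*d) (toeplitz_set n M) S"
  shows "lower_toeplitz_ideal n M (p div s_minus n M p S) \<subseteq> S"
proof -
  let ?sm = "s_minus n M p S"
  let ?J = "lower_toeplitz_ideal n M (p div ?sm)"
  have "?sm dvd p" unfolding s_minus_def by (rule Gcd_dvd) simp
  then have p: "?sm * (p div ?sm) = p" by simp
  have ST: "S \<subseteq> toeplitz_set n M" using maxS unfolding maximal_subalgebra_in_def by blast
  show ?thesis
  proof (rule maximal_subalgebra_absorbs_ideal[OF maxS])
    show "is_subalgebra (n*d) ?J"
      by (rule is_subalgebra_lower_toeplitz_ideal[OF M minp]) (metis p dvd_triv_right)
  next
    fix X Y assume X: "X \<in> S" and Y: "Y \<in> ?J"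
    obtain \<beta> where X\<beta>: "X = block_toeplitz n M \<beta>" using toeplitz_setE[OF M] X ST by blast
    then have "\<And>j. 1 \<le> j \<Longrightarrow> j < int n \<Longrightarrow> ?sm dvd \<beta> (- j)"
      using s_minus_dvd_upper_block[OF M] X by blast
    then show "X * Y \<in> ?J \<and> Y * X \<in> ?J"
      unfolding X\<beta> using lower_toeplitz_ideal_mult[OF M minp p _ Y] by blast
  next
    show "{X + Y | X Y. X \<in> S \<and> Y \<in> ?J} \<subseteq> toeplitz_set n M"
    proof
      fix Z assume "Z \<in> {X + Y | X Y. X \<in> S \<and> Y \<in> ?J}"
      then obtain X Y where "Z = X + Y" "X \<in> S" "Y \<in> ?J" by blast
      moreover from this obtain b c where "X = block_toeplitz n M b" "Y = block_toeplitz n M c"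
        using toeplitz_setE[OF M] ST lower_toeplitz_ideal_subset[OF M] by (metis subsetD)
      ultimately show "Z \<in> toeplitz_set n M"
        by (simp add: block_toeplitz_add[OF M] block_toeplitz_mem_toeplitz_set[OF M])
    qed
  qed
qed

lemma s_plus_mult_s_minus_dvd:
  assumes n: "n \<ge> 2" and M: "M \<in> carrier_mat d d" and minp: "is_min_poly M p"
    and maxS: "maximal_subalgebra_in (n*d) (toeplitz_set n M) S"
  shows "s_plus n M p S * s_minus n M p S dvd p"
proof -
  let ?sm = "s_minus n M p S"
  define c where "c m = (if m = 1 then p div ?sm else 0)" for m :: int
  have "block_toeplitz n M c \<in> lower_toeplitz_ideal n M (p div ?sm)"
    unfolding lower_toeplitz_ideal_def c_def by auto
  then have "block_toeplitz n M c \<in> S"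
    using lower_toeplitz_ideal_subset_maximal_subalgebra[OF M minp maxS] by blast
  then have "s_plus n M p S dvd c 1" by (rule s_plus_dvd_lower_block[OF M]) (use n in auto)
  then have "s_plus n M p S * ?sm dvd p div ?sm * ?sm" by (simp add: c_def)
  moreover have "?sm dvd p" unfolding s_minus_def by (rule Gcd_dvd) simp
  ultimately show ?thesis by simp
qed

lemma dvd_mult_cross_diff:
  fixes p :: "'a::comm_ring_1"
  assumes "p dvd x1 * y2 - y1 * x2"
    and "p dvd x1 - s * a1" "p dvd x2 - s * a2" "p dvd y1 - t * b1" "p dvd y2 - t * b2"
  shows "p dvd s * t * (a1 * b2 - b1 * a2)"
proof -
  have "s * t * (a1 * b2 - b1 * a2) = (x1 * y2 - y1 * x2) - y2 * (x1 - s * a1)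
      - s * a1 * (y2 - t * b2) + x2 * (y1 - t * b1) + t * b1 * (x2 - s * a2)"
    by (simp add: algebra_simps)
  then show ?thesis by (simp only:) (rule assms dvd_add dvd_diff dvd_mult)+
qed

lemma dvd_mult_diff_by_inverses:
  fixes p :: "'a::comm_ring_1"
  assumes "p dvd q * (a1 * b2 - b1 * a2)" and "p dvd g1 * b1 - 1" "p dvd g2 * b2 - 1"
  shows "p dvd q * (a1 * g1 - a2 * g2)"
proof -
  have "q * (a1 * g1 - a2 * g2) = q * a2 * g2 * (g1 * b1 - 1) - q * a1 * g1 * (g2 * b2 - 1)
      + g1 * g2 * (q * (a1 * b2 - b1 * a2))"
    by (simp add: algebra_simps)
  then show ?thesis by (simp only:) (rule assms dvd_add dvd_diff dvd_mult)+
qed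

theorem lemma7p3:
  fixes n d :: nat and M :: "complex mat" and p :: "complex poly"
    and S :: "complex mat set" and A :: "complex mat"
    and a :: "int \<Rightarrow> complex poly" and \<gamma> :: "int \<Rightarrow> complex poly"
  assumes n2: "n \<ge> 2"
    and M: "M \<in> carrier_mat d d"
    and minp: "is_min_poly M p"
    and nonderog: "char_poly M = p"
    and maxS: "maximal_subalgebra_in (n*d) (toeplitz_set n M) S"
    and gen: "generic n d S"
    and AS: "A \<in> S"
    and cop: "\<forall>j\<in>{1..int n - 1}. coprime (a j) p \<and> coprime (a (- j)) p"
    and Apos: "\<forall>j\<in>{1..int n - 1}.
                 blk d A j = poly_mat (s_plus n M p S) M * poly_mat (a j) M"
    and Aneg: "\<forall>j\<in>{1..int n - 1}.
                 blk d A (- j) = poly_mat (s_minus n M p S) M * poly_mat (a (- j)) M"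
    and gam: "\<forall>i\<in>{1..int n - 1}. p dvd \<gamma> i * a (i - int n) - 1"
  shows "\<forall>i\<in>{1..int n - 1}. \<forall>j\<in>{1..int n - 1}.
           (p div (s_plus n M p S * s_minus n M p S)) dvd (a i * \<gamma> i - a j * \<gamma> j)"
proof (intro ballI)
  fix i j assume i: "i \<in> {1..int n - 1}" and j: "j \<in> {1..int n - 1}"
  let ?sp = "s_plus n M p S" and ?sm = "s_minus n M p S"
  have "A \<in> toeplitz_set n M" "A * A \<in> toeplitz_set n M"
    using maxS AS unfolding maximal_subalgebra_in_def is_subalgebra_def by auto
  then obtain \<alpha> where A: "A = block_toeplitz n M \<alpha>" and AA: "A * A \<in> toeplitz_set n M"
    using toeplitz_setE[OF M] by metis
  have pos: "p dvd \<alpha> k - ?sp * a k" if "k \<in> {1..int n - 1}" for k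
    using Apos that blk_block_toeplitz[OF M, of n k \<alpha>]
    by (simp add: A poly_mat_mult[OF M] poly_mat_eq_iff_dvd[OF M minp, symmetric])
  have neg: "p dvd \<alpha> (k - int n) - ?sm * a (k - int n)" if "k \<in> {1..int n - 1}" for k
    using Aneg[rule_format, of "int n - k"] that blk_block_toeplitz[OF M, of n "k - int n" \<alpha>]
    by (simp add: A poly_mat_mult[OF M] poly_mat_eq_iff_dvd[OF M minp, symmetric])
  have "p dvd \<alpha> i * \<alpha> (j - int n) - \<alpha> (i - int n) * \<alpha> j"
    using block_toeplitz_mult_relation[OF M minp AA[unfolded A]] i j by simp
  then have "p dvd ?sp * ?sm * (a i * a (j - int n) - a (i - int n) * a j)"
    by (rule dvd_mult_cross_diff) (use pos neg i j in auto)
  then have "p dvd ?sp * ?sm * (a i * \<gamma> i - a j * \<gamma> j)"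
    by (rule dvd_mult_diff_by_inverses) (use gam i j in auto)
  moreover have "?sp * ?sm dvd p" by (rule s_plus_mult_s_minus_dvd[OF n2 M minp maxS])
  moreover have "?sp * ?sm \<noteq> 0"
    using calculation(2) minp unfolding is_min_poly_def by auto
  ultimately show "p div (?sp * ?sm) dvd a i * \<gamma> i - a j * \<gamma> j"
    by (simp add: div_dvd_iff_mult mult.commute)
qed

end
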